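(* Let $q$ be a prime power, $k<n$ integers and ${\mathcal D}$ a probability distribution on $\{0,1,\dots,k\}$. Consider the following randomized algorithm PrangeOne on input ${\mathbf{H}}\in\mathbb{F}_q^{(n-k)\times n}$ and ${\mathbf{s}}\in\mathbb{F}_q^{n-k}$: draw $t\sim{\mathcal D}$; let ${\mathcal I}$ be an information set of the code $\{{\mathbf{x}}:{\mathbf{x}}{\mathbf{H}}^\top={\mathbf{0}}\}$ (a set of $k$ positions whose complement indexes $n-k$ linearly independent columns of ${\mathbf{H}}$); draw ${\mathbf{x}}$ uniformly among the vectors of $\mathbb{F}_q^n$ with $|{\mathbf{x}}_{\mathcal I}|=t$; output the unique ${\mathbf{e}}\in\mathbb{F}_q^n$ with ${\mathbf{e}}{\mathbf{H}}^\top={\mathbf{s}}$ and ${\mathbf{e}}_{\mathcal I}={\mathbf{x}}_{\mathcal I}$. When ${\mathbf{H}}$ is chosen uniformly at random in $\mathbb{F}_q^{(n-k)\times n}$ and ${\mathbf{s}}$ uniformly at random in $\mathbb{F}_q^{n-k}$, the output ${\mathbf{e}}$ satisfies $|{\mathbf{e}}|=S+T$, where $S\in\{0,\dots,n-k\}$ and $T\in\{0,\dots,k\}$ are independent random variables, $S$ is distributed as the Hamming weight of a uniformly random vector of $\mathbb{F}_q^{n-k}$, and $\mathbb{P}(T=t)={\mathcal D}(t)$. Consequently $$\mathbb{P}(|{\mathbf{e}}|=w)=\sum_{t=0}^{w}\frac{\binom{n-k}{w-t}(q-1)^{w-t}}{q^{n-k}}{\mathcal D}(t),\qquad \mathbb{E}(|{\mathbf{e}}|)=\overline{{\mathcal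 D}}+\frac{q-1}{q}(n-k),$$ where $\overline{{\mathcal D}}=\sum_{t=0}^k t\,{\mathcal D}(t)$.
   Context: $|{\mathbf{x}}|$ denotes the Hamming weight (number of nonzero coordinates) of ${\mathbf{x}}$; ${\mathbf{x}}_{\mathcal I}$ denotes the restriction of ${\mathbf{x}}$ to the coordinates in ${\mathcal I}$. *)

theory Defs
  imports "HOL-Probability.Probability"
begin

text \<open>Vectors of length n over a finite field 'a are represented as functions
  nat \<Rightarrow> 'a vanishing outside {..<n}; an m \<times> n matrix H is a function
  nat \<Rightarrow> nat \<Rightarrow> 'a (row index first) vanishing outside {..<m} \<times> {..<n}.\<close>

definition vecs :: "nat \<Rightarrow> (nat \<Rightarrow> 'a::zero) set" where
  "vecs n = {x. \<forall>i. n \<le> i \<longrightarrow> x i = 0}"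

definition mats :: "nat \<Rightarrow> nat \<Rightarrow> (nat \<Rightarrow> nat \<Rightarrow> 'a::zero) set" where
  "mats m n = {H. \<forall>j i. (m \<le> j \<or> n \<le> i) \<longrightarrow> H j i = 0}"

definition hweight :: "nat \<Rightarrow> (nat \<Rightarrow> 'a::zero) \<Rightarrow> nat" where
  "hweight n x = card {i \<in> {..<n}. x i \<noteq> 0}"

definition restr_weight :: "nat set \<Rightarrow> (nat \<Rightarrow> 'a::zero) \<Rightarrow> nat" where
  "restr_weight I x = card {i \<in> I. x i \<noteq> 0}"

definition syndrome :: "nat \<Rightarrow> nat \<Rightarrow> (nat \<Rightarrow> nat \<Rightarrow> 'a::comm_semiring_1) \<Rightarrow> (nat \<Rightarrow> 'a) \<Rightarrow> (nat \<Rightarrow> 'a)" where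
  "syndrome m n H e = (\<lambda>j. if j < m then (\<Sum>i<n. e i * H j i) else 0)"

definition cols_lin_indep :: "nat \<Rightarrow> (nat \<Rightarrow> nat \<Rightarrow> 'a::field) \<Rightarrow> nat set \<Rightarrow> bool" where
  "cols_lin_indep m H J \<longleftrightarrow>
     (\<forall>c::nat \<Rightarrow> 'a. (\<forall>j<m. (\<Sum>i\<in>J. c i * H j i) = 0) \<longrightarrow> (\<forall>i\<in>J. c i = 0))"

definition info_set :: "nat \<Rightarrow> nat \<Rightarrow> (nat \<Rightarrow> nat \<Rightarrow> 'a::field) \<Rightarrow> nat set \<Rightarrow> bool" where
  "info_set n k H I \<longleftrightarrow> I \<subseteq> {..<n} \<and> card I = k \<and>
     cols_lin_indep (n - k) H ({..<n} - I)"

definition good_mats :: "nat \<Rightarrow> nat \<Rightarrow> (nat \<Rightarrow> nat \<Rightarrow> 'a::field) set" where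
  "good_mats n k = {H \<in> mats (n - k) n. \<exists>I. info_set n k H I}"

text \<open>PrangeOne. The information set is chosen by an arbitrary (possibly randomized)
  rule Isel; t ~ D; x uniform among length-n vectors with |x_I| = t; output the
  unique e with e H^T = s and e_I = x_I.\<close>
definition prange_one ::
  "nat \<Rightarrow> nat \<Rightarrow> nat pmf \<Rightarrow> ((nat \<Rightarrow> nat \<Rightarrow> 'a::{finite,field}) \<Rightarrow> nat set pmf)
   \<Rightarrow> (nat \<Rightarrow> nat \<Rightarrow> 'a) \<Rightarrow> (nat \<Rightarrow> 'a) \<Rightarrow> (nat \<Rightarrow> 'a) pmf" where
  "prange_one n k D Isel H s =
     do { t \<leftarrow> D;
          I \<leftarrow> Isel H;
          x \<leftarrow> pmf_of_set {x \<in> vecs n. restr_weight I x = t};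
          return_pmf (THE e. e \<in> vecs n \<and> syndrome (n - k) n H e = s \<and> (\<forall>i\<in>I. e i = x i)) }"

definition prange_output ::
  "nat \<Rightarrow> nat \<Rightarrow> nat pmf \<Rightarrow> ((nat \<Rightarrow> nat \<Rightarrow> 'a::{finite,field}) \<Rightarrow> nat set pmf) \<Rightarrow> (nat \<Rightarrow> 'a) pmf" where
  "prange_output n k D Isel =
     do { H \<leftarrow> pmf_of_set (good_mats n k);
          s \<leftarrow> pmf_of_set (vecs (n - k));
          prange_one n k D Isel H s }"

end

theory Submission
  imports Defs
begin

text \<open>Fix a parity-check matrix H, an information set I and a vector x with |x_I| = t.
  Since the columns of H outside I are linearly independent, e \<mapsto> e H^T is a bijection
  from the vectors agreeing with x on I onto F_q^(n-k), so for a uniform syndrome s the output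
  e is uniform among these vectors. Its weight is t plus the weight of a uniform vector on the
  n - k positions outside I, a distribution that depends neither on H nor on I nor on x.
  Hence |e| = S + T with S and T independent, and the formulas for the distribution and the
  mean of |e| follow by counting vectors of given weight.\<close>

lemma expectation_plus_pair_pmf:
  assumes "finite (set_pmf A)" "finite (set_pmf B)"
  shows "measure_pmf.expectation (map_pmf (\<lambda>(s, t). s + t) (pair_pmf A B)) real
       = measure_pmf.expectation A real + measure_pmf.expectation B real"
proof -
  have "finite (set_pmf (pair_pmf A B))"
    using assms by (simp add: set_pair_pmf)
  then have "measure_pmf.expectation (pair_pmf A B) (\<lambda>p. real (fst p) + real (snd p))
      = measure_pmf.expectation (pair_pmf A B) (\<lambda>p. real (fst p))
        + measure_pmf.expectation (pair_pmf A B) (\<lambda>p. real (snd p))"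
    by (intro Bochner_Integration.integral_add integrable_measure_pmf_finite)
  then show ?thesis
    by (simp add: case_prod_beta)
qed

lemma expectation_real_pmf_atLeastAtMost:
  assumes "set_pmf D \<subseteq> {0..k}"
  shows "measure_pmf.expectation D real = (\<Sum>t = 0..k. real t * pmf D t)"
  using assms by (subst integral_measure_pmf[of "{0..k}"]) (auto simp: mult.commute)

lemma vecs_eq_PiE_dflt: "vecs n = PiE_dflt {..<n} 0 (\<lambda>_. UNIV)"
  by (auto simp: vecs_def PiE_dflt_def)

lemma finite_vecs [simp]: "finite (vecs n :: (nat \<Rightarrow> 'a::{finite,zero}) set)"
  unfolding vecs_eq_PiE_dflt by (intro finite_PiE_dflt) auto

lemma vecs_nonempty [simp]: "vecs n \<noteq> {}"
  by (auto simp: vecs_def intro!: exI[of _ "\<lambda>_. 0"])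

lemma card_vecs: "card (vecs n :: (nat \<Rightarrow> 'a::{finite,zero}) set) = CARD('a) ^ n"
  unfolding vecs_eq_PiE_dflt by (subst card_PiE_dflt) auto

lemma card_PiE_dflt_support_eq:
  fixes S :: "'i \<Rightarrow> 'a::{finite,zero} set"
  assumes "finite A" "B \<subseteq> J" "J \<subseteq> A" "\<forall>i\<in>J. S i = UNIV"
  shows "card {v \<in> PiE_dflt A 0 S. {i \<in> J. v i \<noteq> 0} = B}
       = (CARD('a) - 1) ^ card B * (\<Prod>i\<in>A - J. card (S i))"
proof -
  define T where "T i = (if i \<in> B then UNIV - {0} else if i \<in> J then {0} else S i)" for i
  have "{v \<in> PiE_dflt A 0 S. {i \<in> J. v i \<noteq> 0} = B} = PiE_dflt A 0 T"
  proof (intro set_eqI)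
    fix v :: "'i \<Rightarrow> 'a"
    have "v i \<in> T i \<longleftrightarrow> v i \<in> S i \<and> (i \<in> J \<longrightarrow> (v i \<noteq> 0 \<longleftrightarrow> i \<in> B))" for i
      using assms(2,4) by (auto simp: T_def)
    moreover have "{i \<in> J. v i \<noteq> 0} = B \<longleftrightarrow> (\<forall>i\<in>J. v i \<noteq> 0 \<longleftrightarrow> i \<in> B)"
      using assms(2) by blast
    ultimately show "v \<in> {v \<in> PiE_dflt A 0 S. {i \<in> J. v i \<noteq> 0} = B} \<longleftrightarrow> v \<in> PiE_dflt A 0 T"
      using assms(3) by (auto simp: PiE_dflt_def)
  qed
  also have "card \<dots> = (\<Prod>i\<in>A. card (T i))"
    using assms(1) by (intro card_PiE_dflt) auto
  also have "\<dots> = (\<Prod>i\<in>B. card (T i)) * (\<Prod>i\<in>J - B. card (T i)) * (\<Prod>i\<in>A - J. card (T i))"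
    using assms(1-3) prod.subset_diff[of B J] prod.subset_diff[of J A] finite_subset
    by (metis mult.commute)
  also have "(\<Prod>i\<in>A - J. card (T i)) = (\<Prod>i\<in>A - J. card (S i))"
    using assms(2) by (intro prod.cong) (auto simp: T_def)
  also have "(\<Prod>i\<in>B. card (T i)) * (\<Prod>i\<in>J - B. card (T i)) = (CARD('a) - 1) ^ card B"
    by (simp add: T_def card_Diff_singleton)
  finally show ?thesis .
qed

lemma card_PiE_dflt_support_card:
  fixes S :: "'i \<Rightarrow> 'a::{finite,zero} set"
  assumes "finite A" "J \<subseteq> A" "\<forall>i\<in>J. S i = UNIV"
  shows "card {v \<in> PiE_dflt A 0 S. card {i \<in> J. v i \<noteq> 0} = s}
       = (card J choose s) * (CARD('a) - 1) ^ s * (\<Prod>i\<in>A - J. card (S i))"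
proof -
  let ?Bs = "{B. B \<subseteq> J \<and> card B = s}"
  have "finite J"
    using assms(1,2) by (rule finite_subset[rotated])
  have "finite (PiE_dflt A 0 S)"
    using assms(1) by (intro finite_PiE_dflt) auto
  have "{v \<in> PiE_dflt A 0 S. card {i \<in> J. v i \<noteq> 0} = s}
      = (\<Union>B\<in>?Bs. {v \<in> PiE_dflt A 0 S. {i \<in> J. v i \<noteq> 0} = B})"
  proof (intro equalityI subsetI)
    fix v
    assume "v \<in> {v \<in> PiE_dflt A 0 S. card {i \<in> J. v i \<noteq> 0} = s}"
    then show "v \<in> (\<Union>B\<in>?Bs. {v \<in> PiE_dflt A 0 S. {i \<in> J. v i \<noteq> 0} = B})"
      by (intro UN_I[of "{i \<in> J. v i \<noteq> 0}"]) auto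
  qed auto
  also have "card \<dots> = (\<Sum>B\<in>?Bs. card {v \<in> PiE_dflt A 0 S. {i \<in> J. v i \<noteq> 0} = B})"
    using \<open>finite J\<close> \<open>finite (PiE_dflt A 0 S)\<close> by (intro card_UN_disjoint) auto
  also have "\<dots> = (\<Sum>B\<in>?Bs. (CARD('a) - 1) ^ s * (\<Prod>i\<in>A - J. card (S i)))"
    using assms by (intro sum.cong) (auto simp: card_PiE_dflt_support_eq)
  also have "\<dots> = (card J choose s) * (CARD('a) - 1) ^ s * (\<Prod>i\<in>A - J. card (S i))"
    using \<open>finite J\<close> by (simp add: n_subsets)
  finally show ?thesis .
qed

lemma card_vecs_hweight:
  "card {v \<in> vecs n :: (nat \<Rightarrow> 'a::{finite,zero}) set. hweight n v = s} = (n choose s) * (CARD('a) - 1) ^ s"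
  using card_PiE_dflt_support_card[where A="{..<n}" and J="{..<n}" and S="\<lambda>_. UNIV :: 'a set"]
  by (simp add: vecs_eq_PiE_dflt hweight_def)

lemma pmf_hweight_plus_uniform:
  "pmf (map_pmf (\<lambda>v. hweight n v + t) (pmf_of_set (vecs n :: (nat \<Rightarrow> 'a::{finite,zero}) set))) w
   = (if t \<le> w then real (n choose (w - t)) * real (CARD('a) - 1) ^ (w - t) / real CARD('a) ^ n
      else 0)"
proof -
  have "vecs n \<inter> (\<lambda>v. hweight n v + t) -` {w} =
      (if t \<le> w then {v \<in> vecs n :: (nat \<Rightarrow> 'a) set. hweight n v = w - t} else {})"
    by auto
  then show ?thesis
    by (simp add: pmf_map measure_pmf_of_set card_vecs_hweight card_vecs)
qed

lemma pmf_bind_hweight_plus_uniform: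
  "pmf (bind_pmf D (\<lambda>t. map_pmf (\<lambda>v. hweight n v + t) (pmf_of_set (vecs n :: (nat \<Rightarrow> 'a::{finite,zero}) set)))) w
   = (\<Sum>t = 0..w. real (n choose (w - t)) * real (CARD('a) - 1) ^ (w - t) / real CARD('a) ^ n * pmf D t)"
proof -
  have "pmf (bind_pmf D (\<lambda>t. map_pmf (\<lambda>v. hweight n v + t) (pmf_of_set (vecs n :: (nat \<Rightarrow> 'a) set)))) w
      = (\<Sum>t\<in>{0..w}. pmf D t *\<^sub>R pmf (map_pmf (\<lambda>v. hweight n v + t) (pmf_of_set (vecs n :: (nat \<Rightarrow> 'a) set))) w)"
    unfolding pmf_bind by (rule integral_measure_pmf) (auto simp: pmf_hweight_plus_uniform split: if_splits)
  then show ?thesis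
    by (simp add: pmf_hweight_plus_uniform mult.commute)
qed

lemma card_vecs_nonzero_at:
  assumes "i < n"
  shows "card {v \<in> vecs n :: (nat \<Rightarrow> 'a::{finite,zero}) set. v i \<noteq> 0} = (CARD('a) - 1) * CARD('a) ^ (n - 1)"
proof -
  have "{j \<in> {i}. v j \<noteq> 0} = {i} \<longleftrightarrow> v i \<noteq> 0" for v :: "nat \<Rightarrow> 'a"
    by auto
  then show ?thesis
    using assms card_PiE_dflt_support_eq[of "{..<n}" "{i}" "{i}" "\<lambda>_. UNIV :: 'a set"]
    by (simp add: vecs_eq_PiE_dflt card_Diff_singleton)
qed

lemma expectation_hweight_uniform:
  "measure_pmf.expectation (pmf_of_set (vecs n :: (nat \<Rightarrow> 'a::{finite,zero}) set)) (\<lambda>v. real (hweight n v))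
    = real (CARD('a) - 1) / real CARD('a) * real n"
proof -
  let ?V = "vecs n :: (nat \<Rightarrow> 'a) set"
  have "(\<Sum>v\<in>?V. hweight n v) = (\<Sum>v\<in>?V. \<Sum>i<n. if v i \<noteq> 0 then 1 else 0)"
    by (simp add: hweight_def sum.If_cases Int_def)
  also have "\<dots> = (\<Sum>i<n. card {v \<in> ?V. v i \<noteq> 0})"
    by (subst sum.swap) (simp add: sum.If_cases Int_def)
  also have "\<dots> = n * ((CARD('a) - 1) * CARD('a) ^ (n - 1))"
    by (simp add: card_vecs_nonzero_at)
  finally have sum_hweight:
    "(\<Sum>v\<in>?V. real (hweight n v)) = real n * (real CARD('a) - 1) * real CARD('a) ^ (n - 1)"
    by (simp only: of_nat_sum [symmetric]) (simp add: of_nat_diff)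
  show ?thesis
  proof (cases n)
    case (Suc m)
    have "real CARD('a) ^ m > 0"
      by simp
    then show ?thesis
      using sum_hweight by (simp add: integral_pmf_of_set card_vecs Suc of_nat_diff field_simps)
  qed (simp add: integral_pmf_of_set hweight_def)
qed

definition vecs_agreeing :: "nat \<Rightarrow> nat set \<Rightarrow> (nat \<Rightarrow> 'a) \<Rightarrow> (nat \<Rightarrow> 'a::zero) set" where
  "vecs_agreeing n I x = {e \<in> vecs n. \<forall>i\<in>I. e i = x i}"

lemma vecs_agreeing_eq_PiE_dflt:
  assumes "x \<in> vecs n"
  shows "vecs_agreeing n I x = PiE_dflt {..<n} 0 (\<lambda>i. if i \<in> I then {x i} else UNIV)"
  using assms by (auto simp: vecs_agreeing_def vecs_def PiE_dflt_def) (metis not_le)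

lemma card_vecs_agreeing_hweight:
  assumes "I \<subseteq> {..<n}" "x \<in> vecs n"
  shows "card {e \<in> vecs_agreeing n I (x :: nat \<Rightarrow> 'a::{finite,zero}). hweight n e = w}
       = (if restr_weight I x \<le> w
          then ((n - card I) choose (w - restr_weight I x)) * (CARD('a) - 1) ^ (w - restr_weight I x)
          else 0)"
proof -
  let ?J = "{..<n} - I"
  have hweight_eq: "hweight n e = restr_weight I x + card {i \<in> ?J. e i \<noteq> 0}"
    if "e \<in> vecs_agreeing n I x" for e
  proof -
    have "{i \<in> {..<n}. e i \<noteq> 0} = {i \<in> I. x i \<noteq> 0} \<union> {i \<in> ?J. e i \<noteq> 0}"
      using that assms(1) by (auto simp: vecs_agreeing_def)
    moreover have "card \<dots> = card {i \<in> I. x i \<noteq> 0} + card {i \<in> ?J. e i \<noteq> 0}"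
      using assms(1) by (intro card_Un_disjoint) (auto intro: finite_subset)
    ultimately show ?thesis
      by (simp add: hweight_def restr_weight_def)
  qed
  have "{e \<in> vecs_agreeing n I x. hweight n e = w}
      = (if restr_weight I x \<le> w
         then {e \<in> vecs_agreeing n I x. card {i \<in> ?J. e i \<noteq> 0} = w - restr_weight I x} else {})"
    using hweight_eq by auto
  moreover have "card ?J = n - card I"
    using assms(1) by (simp add: card_Diff_subset finite_subset)
  ultimately show ?thesis
    using assms(2) card_PiE_dflt_support_card[of "{..<n}" ?J "\<lambda>i. if i \<in> I then {x i} else UNIV"]
    by (simp add: vecs_agreeing_eq_PiE_dflt)
qed

lemma card_vecs_agreeing:
  assumes "I \<subseteq> {..<n}" "x \<in> vecs n"
  shows "card (vecs_agreeing n I (x :: nat \<Rightarrow> 'a::{finite,zero})) = CARD('a) ^ (n - card I)"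
proof -
  have "card (vecs_agreeing n I x) = (\<Prod>i<n. card (if i \<in> I then {x i} else UNIV))"
    using assms(2) by (simp add: vecs_agreeing_eq_PiE_dflt card_PiE_dflt)
  also have "\<dots> = (\<Prod>i<n. if i \<in> I then 1 else CARD('a))"
    by (intro prod.cong) auto
  also have "\<dots> = CARD('a) ^ card ({..<n} - I)"
    by (simp add: prod.If_cases Diff_eq)
  finally show ?thesis
    using assms(1) by (simp add: card_Diff_subset finite_subset)
qed

lemma map_hweight_uniform_vecs_agreeing:
  fixes x :: "nat \<Rightarrow> 'a::{finite,zero}"
  assumes "I \<subseteq> {..<n}" "x \<in> vecs n"
  shows "map_pmf (hweight n) (pmf_of_set (vecs_agreeing n I x))
       = map_pmf (\<lambda>v. hweight (n - card I) v + restr_weight I x)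
           (pmf_of_set (vecs (n - card I) :: (nat \<Rightarrow> 'a) set))"
proof (rule pmf_eqI)
  fix w
  have "vecs_agreeing n I x \<noteq> {}"
    using assms(2) by (auto simp: vecs_agreeing_def)
  moreover have "finite (vecs_agreeing n I x)"
    unfolding vecs_agreeing_def by (rule finite_subset[OF _ finite_vecs]) auto
  ultimately have "pmf (map_pmf (hweight n) (pmf_of_set (vecs_agreeing n I x))) w
      = card {e \<in> vecs_agreeing n I x. hweight n e = w} / card (vecs_agreeing n I x)"
    by (simp add: pmf_map measure_pmf_of_set vimage_def Int_def conj_commute)
  then show "pmf (map_pmf (hweight n) (pmf_of_set (vecs_agreeing n I x))) w
      = pmf (map_pmf (\<lambda>v. hweight (n - card I) v + restr_weight I x)
           (pmf_of_set (vecs (n - card I) :: (nat \<Rightarrow> 'a) set))) w"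
    using assms by (simp add: pmf_hweight_plus_uniform card_vecs_agreeing_hweight card_vecs_agreeing)
qed

lemma inj_on_syndrome_vecs_agreeing:
  fixes H :: "nat \<Rightarrow> nat \<Rightarrow> 'a::field"
  assumes "cols_lin_indep m H ({..<n} - I)"
  shows "inj_on (syndrome m n H) (vecs_agreeing n I x)"
proof (rule inj_onI)
  fix e e'
  assume e: "e \<in> vecs_agreeing n I x" and e': "e' \<in> vecs_agreeing n I x"
    and same: "syndrome m n H e = syndrome m n H e'"
  define c where "c i = e i - e' i" for i
  have c_zero: "c i = 0" if "i \<notin> {..<n} - I" for i
    using that e e' by (auto simp: c_def vecs_agreeing_def vecs_def)
  have "(\<Sum>i\<in>{..<n} - I. c i * H j i) = 0" if "j < m" for j
  proof -
    have "(\<Sum>i\<in>{..<n} - I. c i * H j i) = (\<Sum>i<n. c i * H j i)"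
      using c_zero by (intro sum.mono_neutral_left) auto
    also have "\<dots> = (\<Sum>i<n. e i * H j i) - (\<Sum>i<n. e' i * H j i)"
      by (simp add: c_def left_diff_distrib sum_subtractf)
    also have "\<dots> = 0"
      using fun_cong[OF same, of j] that by (simp add: syndrome_def)
    finally show ?thesis .
  qed
  then have "\<forall>i\<in>{..<n} - I. c i = 0"
    using assms unfolding cols_lin_indep_def by blast
  with c_zero show "e = e'"
    by (auto simp: c_def fun_eq_iff)
qed

lemma bij_betw_syndrome_vecs_agreeing:
  fixes H :: "nat \<Rightarrow> nat \<Rightarrow> 'a::{finite,field}"
  assumes "info_set n k H I" "x \<in> vecs n"
  shows "bij_betw (syndrome (n - k) n H) (vecs_agreeing n I x) (vecs (n - k))"
proof -
  have I: "I \<subseteq> {..<n}" "card I = k"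
    using assms(1) by (auto simp: info_set_def)
  have inj: "inj_on (syndrome (n - k) n H) (vecs_agreeing n I x)"
    using assms(1) by (intro inj_on_syndrome_vecs_agreeing) (simp add: info_set_def)
  have "syndrome (n - k) n H ` vecs_agreeing n I x \<subseteq> vecs (n - k)"
    by (auto simp: syndrome_def vecs_def)
  moreover have "card (syndrome (n - k) n H ` vecs_agreeing n I x) = card (vecs (n - k) :: (nat \<Rightarrow> 'a) set)"
    using I assms(2) by (simp add: card_image[OF inj] card_vecs_agreeing card_vecs)
  ultimately have "syndrome (n - k) n H ` vecs_agreeing n I x = vecs (n - k)"
    by (intro card_subset_eq) simp_all
  with inj show ?thesis
    by (simp add: bij_betw_def)
qed

lemma map_hweight_prange_solution:
  fixes H :: "nat \<Rightarrow> nat \<Rightarrow> 'a::{finite,field}"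
  assumes "info_set n k H I" "x \<in> vecs n"
  shows "map_pmf (\<lambda>s. hweight n (THE e. e \<in> vecs n \<and> syndrome (n - k) n H e = s \<and> (\<forall>i\<in>I. e i = x i)))
           (pmf_of_set (vecs (n - k)))
       = map_pmf (\<lambda>v. hweight (n - k) v + restr_weight I x) (pmf_of_set (vecs (n - k) :: (nat \<Rightarrow> 'a) set))"
proof -
  let ?E = "vecs_agreeing n I x" and ?f = "syndrome (n - k) n H"
  have bij: "bij_betw ?f ?E (vecs (n - k))"
    using assms by (rule bij_betw_syndrome_vecs_agreeing)
  have I: "I \<subseteq> {..<n}" "card I = k"
    using assms(1) by (auto simp: info_set_def)
  have "(THE e. e \<in> vecs n \<and> ?f e = s \<and> (\<forall>i\<in>I. e i = x i)) = the_inv_into ?E ?f s" for s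
    unfolding the_inv_into_def vecs_agreeing_def by (rule arg_cong[where f = The]) auto
  then have "map_pmf (\<lambda>s. hweight n (THE e. e \<in> vecs n \<and> ?f e = s \<and> (\<forall>i\<in>I. e i = x i)))
           (pmf_of_set (vecs (n - k)))
      = map_pmf (hweight n) (map_pmf (the_inv_into ?E ?f) (pmf_of_set (vecs (n - k))))"
    by (simp add: pmf.map_comp o_def)
  also have "map_pmf (the_inv_into ?E ?f) (pmf_of_set (vecs (n - k))) = pmf_of_set ?E"
    using bij_betw_the_inv_into[OF bij]
    by (simp add: map_pmf_of_set_inj bij_betw_def)
  finally show ?thesis
    using I assms(2) by (simp add: map_hweight_uniform_vecs_agreeing)
qed

lemma finite_good_mats: "finite (good_mats n k :: (nat \<Rightarrow> nat \<Rightarrow> 'a::{finite,field}) set)"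
proof (rule finite_subset)
  show "good_mats n k \<subseteq> PiE_dflt {..<n - k} (\<lambda>_. 0) (\<lambda>_. vecs n :: (nat \<Rightarrow> 'a) set)"
    by (auto simp: good_mats_def mats_def PiE_dflt_def vecs_def fun_eq_iff)
  show "finite (PiE_dflt {..<n - k} (\<lambda>_. 0) (\<lambda>_. vecs n :: (nat \<Rightarrow> 'a) set))"
    by (intro finite_PiE_dflt) auto
qed

lemma good_mats_nonempty:
  assumes "k \<le> n"
  shows "good_mats n k \<noteq> ({} :: (nat \<Rightarrow> nat \<Rightarrow> 'a::field) set)"
proof -
  define H :: "nat \<Rightarrow> nat \<Rightarrow> 'a" where "H j i = (if j < n - k \<and> i = j + k then 1 else 0)" for j i
  have "H \<in> mats (n - k) n"
    by (auto simp: H_def mats_def)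
  have "cols_lin_indep (n - k) H ({..<n} - {..<k})"
    unfolding cols_lin_indep_def
  proof (intro allI impI ballI)
    fix c :: "nat \<Rightarrow> 'a" and i
    assume c: "\<forall>j<n - k. (\<Sum>i\<in>{..<n} - {..<k}. c i * H j i) = 0" and i: "i \<in> {..<n} - {..<k}"
    have "(\<Sum>i'\<in>{..<n} - {..<k}. c i' * H (i - k) i') = c i"
      using i by (subst sum.mono_neutral_right[where S = "{i}"]) (auto simp: H_def)
    then show "c i = 0"
      using c i by auto
  qed
  then have "info_set n k H {..<k}"
    using assms by (simp add: info_set_def)
  with \<open>H \<in> mats (n - k) n\<close> show ?thesis
    by (auto simp: good_mats_def)
qed

lemma restr_weight_vecs_nonempty:
  assumes "I \<subseteq> {..<n}" "t \<le> card I"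
  shows "{x \<in> vecs n :: (nat \<Rightarrow> 'a::zero_neq_one) set. restr_weight I x = t} \<noteq> {}"
proof -
  obtain B where B: "B \<subseteq> I" "card B = t"
    using obtain_subset_with_card_n[OF assms(2)] by blast
  define x :: "nat \<Rightarrow> 'a" where "x i = (if i \<in> B then 1 else 0)" for i
  have "x \<in> vecs n"
    using B assms(1) by (auto simp: x_def vecs_def)
  moreover have "{i \<in> I. x i \<noteq> 0} = B"
    using B by (auto simp: x_def)
  ultimately show ?thesis
    using B by (auto simp: restr_weight_def)
qed

lemma map_hweight_prange_one_uniform_syndrome:
  fixes H :: "nat \<Rightarrow> nat \<Rightarrow> 'a::{finite,field}"
  assumes "set_pmf D \<subseteq> {0..k}" "set_pmf (Isel H) \<subseteq> {I. info_set n k H I}"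
  shows "map_pmf (hweight n) (bind_pmf (pmf_of_set (vecs (n - k))) (prange_one n k D Isel H))
       = bind_pmf D (\<lambda>t. map_pmf (\<lambda>v. hweight (n - k) v + t) (pmf_of_set (vecs (n - k) :: (nat \<Rightarrow> 'a) set)))"
proof -
  let ?U = "pmf_of_set (vecs (n - k)) :: (nat \<Rightarrow> 'a) pmf"
  let ?X = "\<lambda>I t. pmf_of_set {x \<in> vecs n :: (nat \<Rightarrow> 'a) set. restr_weight I x = t}"
  let ?e = "\<lambda>s I x. THE e. e \<in> vecs n \<and> syndrome (n - k) n H e = s \<and> (\<forall>i\<in>I. e i = x i)"
  have "map_pmf (hweight n) (bind_pmf ?U (prange_one n k D Isel H))
      = bind_pmf D (\<lambda>t. bind_pmf (Isel H) (\<lambda>I. bind_pmf (?X I t)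
          (\<lambda>x. map_pmf (\<lambda>s. hweight n (?e s I x)) ?U)))"
    unfolding prange_one_def
    by (simp add: map_pmf_def bind_assoc_pmf bind_return_pmf bind_commute_pmf[of ?U])
  also have "\<dots> = bind_pmf D (\<lambda>t. bind_pmf (Isel H) (\<lambda>I. bind_pmf (?X I t)
          (\<lambda>x. map_pmf (\<lambda>v. hweight (n - k) v + t) ?U)))"
  proof (intro bind_pmf_cong refl)
    fix t I x
    assume t: "t \<in> set_pmf D" and I: "I \<in> set_pmf (Isel H)" and x: "x \<in> set_pmf (?X I t)"
    have info: "info_set n k H I"
      using I assms(2) by auto
    then have "{x \<in> vecs n :: (nat \<Rightarrow> 'a) set. restr_weight I x = t} \<noteq> {}"
      using t assms(1) by (intro restr_weight_vecs_nonempty) (auto simp: info_set_def)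
    then have "x \<in> vecs n" "restr_weight I x = t"
      using x by (auto simp: set_pmf_of_set)
    then show "map_pmf (\<lambda>s. hweight n (?e s I x)) ?U = map_pmf (\<lambda>v. hweight (n - k) v + t) ?U"
      using map_hweight_prange_solution[OF info] by simp
  qed
  finally show ?thesis
    by simp
qed

lemma map_hweight_prange_output:
  fixes Isel :: "(nat \<Rightarrow> nat \<Rightarrow> 'a::{finite,field}) \<Rightarrow> nat set pmf"
  assumes "k \<le> n" "set_pmf D \<subseteq> {0..k}"
    and "\<And>H. H \<in> good_mats n k \<Longrightarrow> set_pmf (Isel H) \<subseteq> {I. info_set n k H I}"
  shows "map_pmf (hweight n) (prange_output n k D Isel)
       = bind_pmf D (\<lambda>t. map_pmf (\<lambda>v. hweight (n - k) v + t) (pmf_of_set (vecs (n - k) :: (nat \<Rightarrow> 'a) set)))"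
proof -
  have "map_pmf (hweight n) (prange_output n k D Isel)
      = bind_pmf (pmf_of_set (good_mats n k))
          (\<lambda>H. map_pmf (hweight n) (bind_pmf (pmf_of_set (vecs (n - k))) (prange_one n k D Isel H)))"
    by (simp add: prange_output_def map_bind_pmf)
  also have "\<dots> = bind_pmf (pmf_of_set (good_mats n k :: (nat \<Rightarrow> nat \<Rightarrow> 'a) set))
          (\<lambda>H. bind_pmf D (\<lambda>t. map_pmf (\<lambda>v. hweight (n - k) v + t)
            (pmf_of_set (vecs (n - k) :: (nat \<Rightarrow> 'a) set))))"
  proof (rule bind_pmf_cong[OF refl])
    fix H :: "nat \<Rightarrow> nat \<Rightarrow> 'a"
    assume "H \<in> set_pmf (pmf_of_set (good_mats n k))"
    then have "H \<in> good_mats n k"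
      by (simp add: set_pmf_of_set[OF good_mats_nonempty[OF assms(1)] finite_good_mats])
    with assms(2,3) show "map_pmf (hweight n) (bind_pmf (pmf_of_set (vecs (n - k))) (prange_one n k D Isel H))
        = bind_pmf D (\<lambda>t. map_pmf (\<lambda>v. hweight (n - k) v + t)
            (pmf_of_set (vecs (n - k) :: (nat \<Rightarrow> 'a) set)))"
      by (intro map_hweight_prange_one_uniform_syndrome) auto
  qed
  finally show ?thesis
    by simp
qed

theorem proposition2:
  fixes n k :: nat
    and D :: "nat pmf"
    and Isel :: "(nat \<Rightarrow> nat \<Rightarrow> 'a::{finite,field}) \<Rightarrow> nat set pmf"
  assumes "k < n"
    and "set_pmf D \<subseteq> {0..k}"
    and "\<And>H. H \<in> good_mats n k \<Longrightarrow> set_pmf (Isel H) \<subseteq> {I. info_set n k H I}"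
  defines "q \<equiv> CARD('a)"
  shows "map_pmf (hweight n) (prange_output n k D Isel) =
           map_pmf (\<lambda>(s, t). s + t)
             (pair_pmf (map_pmf (hweight (n - k)) (pmf_of_set (vecs (n - k) :: (nat \<Rightarrow> 'a) set))) D)
       \<and> (\<forall>w. measure_pmf.prob (prange_output n k D Isel) {e. hweight n e = w} =
           (\<Sum>t = 0..w. real ((n - k) choose (w - t)) * real (q - 1) ^ (w - t) / real q ^ (n - k)
                        * pmf D t))
       \<and> measure_pmf.expectation (prange_output n k D Isel) (\<lambda>e. real (hweight n e)) =
           (\<Sum>t = 0..k. real t * pmf D t) + real (q - 1) / real q * real (n - k)"
proof -
  let ?U = "pmf_of_set (vecs (n - k)) :: (nat \<Rightarrow> 'a) pmf"
  have weight_output: "map_pmf (hweight n) (prange_output n k D Isel)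
      = bind_pmf D (\<lambda>t. map_pmf (\<lambda>v. hweight (n - k) v + t) ?U)"
    using assms(1-3) by (intro map_hweight_prange_output) auto
  also have "\<dots> = map_pmf (\<lambda>(s, t). s + t) (pair_pmf (map_pmf (hweight (n - k)) ?U) D)"
    by (simp add: pair_pmf_def map_pmf_def bind_assoc_pmf bind_return_pmf bind_commute_pmf[of D])
  finally have weight_sum: "map_pmf (hweight n) (prange_output n k D Isel) = \<dots>" .
  have "measure_pmf.prob (prange_output n k D Isel) {e. hweight n e = w}
      = pmf (map_pmf (hweight n) (prange_output n k D Isel)) w" for w
    by (simp add: pmf_map vimage_def)
  then have prob: "measure_pmf.prob (prange_output n k D Isel) {e. hweight n e = w} =
      (\<Sum>t = 0..w. real ((n - k) choose (w - t)) * real (q - 1) ^ (w - t) / real q ^ (n - k) * pmf D t)" for w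
    by (simp add: weight_output pmf_bind_hweight_plus_uniform q_def)
  have "measure_pmf.expectation (prange_output n k D Isel) (\<lambda>e. real (hweight n e))
      = measure_pmf.expectation (map_pmf (hweight n) (prange_output n k D Isel)) real"
    by simp
  also have "\<dots> = measure_pmf.expectation (map_pmf (hweight (n - k)) ?U) real + measure_pmf.expectation D real"
    unfolding weight_sum using finite_subset[OF assms(2)] by (intro expectation_plus_pair_pmf) simp_all
  finally show ?thesis
    using weight_sum prob assms(2)
    by (simp add: expectation_hweight_uniform expectation_real_pmf_atLeastAtMost q_def)
qed

end
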